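(* Let $M\geq 1$. A seller holds $M$ units of a single good; the seller values a bundle of $i$ units at $\sigma_i$ and a buyer values a bundle of $i$ units at $\beta_i$ ($i=0,\dots,M$, with $\beta_0=0$). The price per unit $p$ is fixed exogenously and both agents have utilities quasi-linear in money. Then the competitive ratio of any DSIC mechanism is (i) at most $1/M$ with general valuations, and (ii) at most $1/H_M$ with submodular valuations, where $H_M=\sum_{j=1}^M\frac1j$.
   Context: Trading $i$ units at price $p$ gives the buyer utility $b_i=\beta_i-p\,i$ and the seller utility $s_i=p\,i+\sigma_{M-i}-\sigma_M$ (so $b_0=s_0=0$ corresponds to no trade). A mechanism receives the agents' reported valuations and outputs a probability distribution $(r_0,\dots,r_M)$ over the number of units traded (at price $p$ per unit). It is DSIC if for each agent reporting the true valuation maximizes his expected utility ($\sum_i r_i b_i$ for the buyer, $\sum_i r_i s_i$ for the seller) whatever the other agent reports. The optimal gain-from-trade subject to individual rationality is $OPT=\max\{b_i+s_i: 0\leq i\leq M,\ b_i\geq 0,\ s_i\geq 0\}$; the mechanism's gain under truthful reports is $G=\sum_{i=1}^M r_i(b_i+s_i)$, and its competitive ratio is the minimum of $G/OPT$ over all admissible valuation profiles. A valuation $(v_i)_{i=0}^M$ is submodular (decreasing marginal returns) if $v_{i+1}-v_i\leq v_i-v_{i-1}$ for all $1\leq i\leq M-1$; in case (ii) both $\beta$ and $\sigma$ are submodular and admissible profiles (true and reported) are the submodular ones. *)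

theory Defs
  imports Complex_Main "HOL-Library.Extended_Real"
begin

text \<open>Valuations are functions nat => real; only the values at 0..M matter,
  admissible valuations are normalised to be 0 beyond M.\<close>

definition buyer_util :: "real \<Rightarrow> (nat \<Rightarrow> real) \<Rightarrow> nat \<Rightarrow> real" where
  "buyer_util p \<beta> i = \<beta> i - p * real i"

definition seller_util :: "nat \<Rightarrow> real \<Rightarrow> (nat \<Rightarrow> real) \<Rightarrow> nat \<Rightarrow> real" where
  "seller_util M p \<sigma> i = p * real i + \<sigma> (M - i) - \<sigma> M"

definition OPT :: "nat \<Rightarrow> real \<Rightarrow> (nat \<Rightarrow> real) \<Rightarrow> (nat \<Rightarrow> real) \<Rightarrow> real" where
  "OPT M p \<beta> \<sigma> = Max {buyer_util p \<beta> i + seller_util M p \<sigma> i | i.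
      i \<le> M \<and> buyer_util p \<beta> i \<ge> 0 \<and> seller_util M p \<sigma> i \<ge> 0}"

definition gain :: "nat \<Rightarrow> real \<Rightarrow> (nat \<Rightarrow> real) \<Rightarrow> (nat \<Rightarrow> real) \<Rightarrow> (nat \<Rightarrow> real) \<Rightarrow> real" where
  "gain M p r \<beta> \<sigma> = (\<Sum>i=1..M. r i * (buyer_util p \<beta> i + seller_util M p \<sigma> i))"

definition is_distribution :: "nat \<Rightarrow> (nat \<Rightarrow> real) \<Rightarrow> bool" where
  "is_distribution M r \<longleftrightarrow> (\<forall>i\<le>M. r i \<ge> 0) \<and> (\<Sum>i\<le>M. r i) = 1"

definition general_val :: "nat \<Rightarrow> (nat \<Rightarrow> real) \<Rightarrow> bool" where
  "general_val M v \<longleftrightarrow> (\<forall>i>M. v i = 0)"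

definition submodular_val :: "nat \<Rightarrow> (nat \<Rightarrow> real) \<Rightarrow> bool" where
  "submodular_val M v \<longleftrightarrow> general_val M v \<and>
     (\<forall>i. 1 \<le> i \<and> i \<le> M - 1 \<longrightarrow> v (i+1) - v i \<le> v i - v (i - 1))"

text \<open>A mechanism maps reported (buyer, seller) valuations to a distribution
  over the number of traded units. DSIC w.r.t. admissible buyer domain B and
  seller domain S.\<close>
definition DSIC :: "nat \<Rightarrow> real \<Rightarrow> ((nat \<Rightarrow> real) \<Rightarrow> bool) \<Rightarrow> ((nat \<Rightarrow> real) \<Rightarrow> bool)
     \<Rightarrow> ((nat \<Rightarrow> real) \<Rightarrow> (nat \<Rightarrow> real) \<Rightarrow> (nat \<Rightarrow> real)) \<Rightarrow> bool" where
  "DSIC M p B S mech \<longleftrightarrow>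
     (\<forall>\<beta> \<sigma>. B \<beta> \<longrightarrow> S \<sigma> \<longrightarrow> is_distribution M (mech \<beta> \<sigma>)) \<and>
     (\<forall>\<beta> \<beta>' \<sigma>. B \<beta> \<longrightarrow> B \<beta>' \<longrightarrow> S \<sigma> \<longrightarrow>
        (\<Sum>i\<le>M. mech \<beta>' \<sigma> i * buyer_util p \<beta> i) \<le> (\<Sum>i\<le>M. mech \<beta> \<sigma> i * buyer_util p \<beta> i)) \<and>
     (\<forall>\<beta> \<sigma> \<sigma>'. B \<beta> \<longrightarrow> S \<sigma> \<longrightarrow> S \<sigma>' \<longrightarrow>
        (\<Sum>i\<le>M. mech \<beta> \<sigma>' i * seller_util M p \<sigma> i) \<le> (\<Sum>i\<le>M. mech \<beta> \<sigma> i * seller_util M p \<sigma> i))"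

definition competitive_ratio :: "nat \<Rightarrow> real \<Rightarrow> ((nat \<Rightarrow> real) \<Rightarrow> bool) \<Rightarrow> ((nat \<Rightarrow> real) \<Rightarrow> bool)
     \<Rightarrow> ((nat \<Rightarrow> real) \<Rightarrow> (nat \<Rightarrow> real) \<Rightarrow> (nat \<Rightarrow> real)) \<Rightarrow> ereal" where
  "competitive_ratio M p B S mech =
     Inf {ereal (gain M p (mech \<beta> \<sigma>) \<beta> \<sigma> / OPT M p \<beta> \<sigma>) | \<beta> \<sigma>.
            B \<beta> \<and> S \<sigma> \<and> OPT M p \<beta> \<sigma> > 0}"

definition buyer_general :: "nat \<Rightarrow> (nat \<Rightarrow> real) \<Rightarrow> bool" where
  "buyer_general M \<beta> \<longleftrightarrow> general_val M \<beta> \<and> \<beta> 0 = 0"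

definition buyer_submodular :: "nat \<Rightarrow> (nat \<Rightarrow> real) \<Rightarrow> bool" where
  "buyer_submodular M \<beta> \<longleftrightarrow> submodular_val M \<beta> \<and> \<beta> 0 = 0"

end

theory Submission
  imports Defs
begin

text \<open>Fix a reference valuation \<open>x\<close> with \<open>x 0 = 0\<close>, increasing and positive on \<open>1..M\<close>, and consider
  the buyers with utility \<open>a x\<^sub>i\<close> and the sellers of type \<open>j\<close> with utility \<open>d (x\<^sub>j - x\<^sub>i)\<close> for
  \<open>i \<ge> 1\<close>, for scales \<open>a, d \<ge> 1\<close>. Truthfulness forces the mechanism's outcome to be invariant
  under rescaling of either agent. Letting the buyer scale grow, a competitive ratio \<open>c\<close>
  forces the expected value \<open>E\<^sub>j\<close> of the traded bundle against seller \<open>j\<close> to be at least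
  \<open>c x\<^sub>j\<close>; letting the seller scale grow, it forces seller \<open>j\<close> a nonnegative surplus. Seller
  truthfulness between types \<open>k\<close> and \<open>k + 1\<close> then lets the trade probability grow by at least
  \<open>c (1 - x\<^sub>k / x\<^sub>k\<^sub>+\<^sub>1)\<close> from type to type, so
  \<open>c (1 + \<Sum>\<^sub>k (1 - x\<^sub>k / x\<^sub>k\<^sub>+\<^sub>1)) \<le> 1\<close>. Geometric \<open>x\<close> with a large ratio gives \<open>c \<le> 1/M\<close>;
  the linear \<open>x\<^sub>i = i\<close>, for which all test valuations are submodular, gives \<open>c \<le> 1/H\<^sub>M\<close>.\<close>

lemma sum_atMost_eq_0_plus: "(\<Sum>i\<le>(M::nat). f i) = f 0 + (\<Sum>i=1..M. (f i :: real))"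
  by (simp add: atMost_atLeast0 sum.atLeast_Suc_atMost)

lemma nonpos_if_multiples_bounded:
  fixes y b :: real
  assumes "\<And>a. a \<ge> 1 \<Longrightarrow> a * y \<le> b"
  shows "y \<le> 0"
proof (rule ccontr)
  assume "\<not> y \<le> 0"
  then have "max 1 ((\<bar>b\<bar> + 1) / y) * y > b"
    by (smt (verit) divide_pos_pos max.cobounded2 mult_right_mono nonzero_eq_divide_eq)
  with assms[of "max 1 ((\<bar>b\<bar> + 1) / y)"] show False by simp
qed

definition trade_prob :: "nat \<Rightarrow> (nat \<Rightarrow> real) \<Rightarrow> real" where
  "trade_prob M \<rho> = (\<Sum>i=1..M. \<rho> i)"

definition expected_value :: "nat \<Rightarrow> (nat \<Rightarrow> real) \<Rightarrow> (nat \<Rightarrow> real) \<Rightarrow> real" where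
  "expected_value M x \<rho> = (\<Sum>i=1..M. \<rho> i * x i)"

lemma is_distribution_nonneg: "is_distribution M \<rho> \<Longrightarrow> i \<le> M \<Longrightarrow> 0 \<le> \<rho> i"
  by (simp add: is_distribution_def)

lemma trade_prob_le_1: "is_distribution M \<rho> \<Longrightarrow> trade_prob M \<rho> \<le> 1"
  using sum_atMost_eq_0_plus[of \<rho> M]
  by (auto simp: is_distribution_def trade_prob_def)

lemma is_distribution_le_1:
  assumes "is_distribution M \<rho>" "1 \<le> i" "i \<le> M"
  shows "\<rho> i \<le> 1"
proof -
  have "\<rho> i \<le> trade_prob M \<rho>"
    unfolding trade_prob_def using assms is_distribution_nonneg[OF assms(1)]
    by (intro member_le_sum) auto
  with trade_prob_le_1[OF assms(1)] show ?thesis by linarith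
qed

lemma expected_value_nonneg:
  "is_distribution M \<rho> \<Longrightarrow> (\<And>i. i \<le> M \<Longrightarrow> 0 \<le> x i) \<Longrightarrow> 0 \<le> expected_value M x \<rho>"
  unfolding expected_value_def by (auto intro!: sum_nonneg simp: is_distribution_nonneg)

lemma expected_value_le_sum:
  assumes "is_distribution M \<rho>" "\<And>i. i \<le> M \<Longrightarrow> 0 \<le> x i"
  shows "expected_value M x \<rho> \<le> (\<Sum>i=1..M. x i)"
  unfolding expected_value_def
proof (rule sum_mono)
  fix i assume "i \<in> {1..M}"
  with assms is_distribution_le_1 show "\<rho> i * x i \<le> x i"
    by (simp add: mult_left_le_one_le is_distribution_nonneg)
qed

lemma OPT_ge:
  assumes "i \<le> M" "buyer_util p \<beta> i \<ge> 0" "seller_util M p \<sigma> i \<ge> 0"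
  shows "buyer_util p \<beta> i + seller_util M p \<sigma> i \<le> OPT M p \<beta> \<sigma>"
proof -
  let ?S = "{buyer_util p \<beta> i + seller_util M p \<sigma> i | i.
              i \<le> M \<and> buyer_util p \<beta> i \<ge> 0 \<and> seller_util M p \<sigma> i \<ge> 0}"
  have "?S \<subseteq> (\<lambda>i. buyer_util p \<beta> i + seller_util M p \<sigma> i) ` {..M}" by auto
  then have "finite ?S" by (rule finite_subset) simp
  moreover have "buyer_util p \<beta> i + seller_util M p \<sigma> i \<in> ?S" using assms by blast
  ultimately show ?thesis unfolding OPT_def by (rule Max_ge)
qed

lemma DSIC_is_distribution:
  "DSIC M p B S mech \<Longrightarrow> B \<beta> \<Longrightarrow> S \<sigma> \<Longrightarrow> is_distribution M (mech \<beta> \<sigma>)"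
  by (simp add: DSIC_def)

lemma DSIC_buyer_truthful:
  "DSIC M p B S mech \<Longrightarrow> B \<beta> \<Longrightarrow> B \<beta>' \<Longrightarrow> S \<sigma> \<Longrightarrow>
    (\<Sum>i\<le>M. mech \<beta>' \<sigma> i * buyer_util p \<beta> i) \<le> (\<Sum>i\<le>M. mech \<beta> \<sigma> i * buyer_util p \<beta> i)"
  by (simp add: DSIC_def)

lemma DSIC_seller_truthful:
  "DSIC M p B S mech \<Longrightarrow> B \<beta> \<Longrightarrow> S \<sigma> \<Longrightarrow> S \<sigma>' \<Longrightarrow>
    (\<Sum>i\<le>M. mech \<beta> \<sigma>' i * seller_util M p \<sigma> i) \<le> (\<Sum>i\<le>M. mech \<beta> \<sigma> i * seller_util M p \<sigma> i)"
  by (simp add: DSIC_def)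

lemma competitive_ratio_le:
  assumes "b > 0"
    and bound: "\<And>c. c > 0 \<Longrightarrow>
      (\<And>\<beta> \<sigma>. B \<beta> \<Longrightarrow> S \<sigma> \<Longrightarrow> OPT M p \<beta> \<sigma> > 0 \<Longrightarrow>
         c * OPT M p \<beta> \<sigma> \<le> gain M p (mech \<beta> \<sigma>) \<beta> \<sigma>) \<Longrightarrow> c \<le> b"
  shows "competitive_ratio M p B S mech \<le> ereal b"
proof (rule ccontr)
  assume "\<not> ?thesis"
  then obtain c where bc: "ereal b < ereal c" and c: "ereal c < competitive_ratio M p B S mech"
    using ereal_dense2 by (metis not_le)
  have "c * OPT M p \<beta> \<sigma> \<le> gain M p (mech \<beta> \<sigma>) \<beta> \<sigma>"
    if "B \<beta>" "S \<sigma>" "OPT M p \<beta> \<sigma> > 0" for \<beta> \<sigma>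
  proof -
    have "competitive_ratio M p B S mech \<le> ereal (gain M p (mech \<beta> \<sigma>) \<beta> \<sigma> / OPT M p \<beta> \<sigma>)"
      unfolding competitive_ratio_def using that by (intro Inf_lower) blast
    from less_le_trans[OF c this] have "c < gain M p (mech \<beta> \<sigma>) \<beta> \<sigma> / OPT M p \<beta> \<sigma>"
      by simp
    with that(3) show ?thesis by (simp add: pos_less_divide_eq)
  qed
  with bound[of c] bc \<open>b > 0\<close> show False by simp
qed

text \<open>The offsets \<open>p i\<close> cancel the payments: the buyer's utility from \<open>i\<close> units is
  \<open>a x\<^sub>i\<close>, and the seller's is \<open>d (x\<^sub>j - x\<^sub>i)\<close> for \<open>i \<ge> 1\<close> and \<open>0\<close> for \<open>i = 0\<close>.\<close>

definition test_buyer :: "nat \<Rightarrow> real \<Rightarrow> (nat \<Rightarrow> real) \<Rightarrow> real \<Rightarrow> nat \<Rightarrow> real" where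
  "test_buyer M p x a i = (if i \<le> M then a * x i + p * real i else 0)"

definition test_seller :: "nat \<Rightarrow> real \<Rightarrow> (nat \<Rightarrow> real) \<Rightarrow> real \<Rightarrow> nat \<Rightarrow> nat \<Rightarrow> real" where
  "test_seller M p x d j k = (if k < M then d * (x j - x (M - k)) - p * real (M - k) else 0)"

lemma buyer_util_test_buyer: "i \<le> M \<Longrightarrow> buyer_util p (test_buyer M p x a) i = a * x i"
  by (simp add: buyer_util_def test_buyer_def)

lemma seller_util_test_seller:
  "i \<le> M \<Longrightarrow> seller_util M p (test_seller M p x d j) i = (if i = 0 then 0 else d * (x j - x i))"
  by (auto simp: seller_util_def test_seller_def algebra_simps)

lemma expected_buyer_util_test_buyer:
  "x 0 = 0 \<Longrightarrow>
    (\<Sum>i\<le>M. \<rho> i * buyer_util p (test_buyer M p x a) i) = a * expected_value M x \<rho>"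
  by (simp add: sum_atMost_eq_0_plus buyer_util_test_buyer expected_value_def
      sum_distrib_left algebra_simps)

lemma expected_seller_util_test_seller:
  "(\<Sum>i\<le>M. \<rho> i * seller_util M p (test_seller M p x d j) i)
     = d * (x j * trade_prob M \<rho> - expected_value M x \<rho>)"
  by (simp add: sum_atMost_eq_0_plus seller_util_test_seller expected_value_def trade_prob_def
      sum_distrib_left sum_subtractf algebra_simps)

lemma gain_test_profile:
  "gain M p \<rho> (test_buyer M p x a) (test_seller M p x d j)
     = a * expected_value M x \<rho> + d * (x j * trade_prob M \<rho> - expected_value M x \<rho>)"
  by (simp add: gain_def buyer_util_test_buyer seller_util_test_seller expected_value_def
      trade_prob_def sum_distrib_left sum_subtractf sum.distrib algebra_simps)

lemma OPT_test_profile_ge: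
  assumes "j \<le> M" "0 \<le> a * x j"
  shows "a * x j \<le> OPT M p (test_buyer M p x a) (test_seller M p x d j)"
  using OPT_ge[of j M p "test_buyer M p x a" "test_seller M p x d j"] assms
  by (cases "j = 0") (simp_all add: buyer_util_test_buyer seller_util_test_seller)

lemma test_buyer_general: "x 0 = 0 \<Longrightarrow> buyer_general M (test_buyer M p x a)"
  by (simp add: buyer_general_def general_val_def test_buyer_def)

lemma test_seller_general: "general_val M (test_seller M p x d j)"
  by (simp add: general_val_def test_seller_def)

lemma test_buyer_submodular: "buyer_submodular M (test_buyer M p real a)"
  by (auto simp: buyer_submodular_def submodular_val_def general_val_def test_buyer_def
      algebra_simps)

lemma test_seller_submodular:
  assumes "d \<ge> 0"
  shows "submodular_val M (test_seller M p real d j)"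
  unfolding submodular_val_def
proof (intro conjI allI impI)
  show "general_val M (test_seller M p real d j)" by (rule test_seller_general)
next
  fix i assume i: "1 \<le> i \<and> i \<le> M - 1"
  let ?\<sigma> = "test_seller M p real d j"
  show "?\<sigma> (i + 1) - ?\<sigma> i \<le> ?\<sigma> i - ?\<sigma> (i - 1)"
  proof (cases "Suc i < M")
    case True
    with i have "i - 1 < M" by simp
    with True i show ?thesis by (simp add: test_seller_def algebra_simps)
  next
    case False
    with i have "M = Suc i" "i - 1 < M" by auto
    with i assms show ?thesis by (simp add: test_seller_def algebra_simps)
  qed
qed

locale ratio_bounded_mechanism =
  fixes M :: nat and p c :: real and x :: "nat \<Rightarrow> real"
    and B S :: "(nat \<Rightarrow> real) \<Rightarrow> bool"
    and mech :: "(nat \<Rightarrow> real) \<Rightarrow> (nat \<Rightarrow> real) \<Rightarrow> (nat \<Rightarrow> real)"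
  assumes M_ge_1: "M \<ge> 1"
    and DSIC: "DSIC M p B S mech"
    and x_0: "x 0 = 0"
    and x_pos: "\<And>i. 1 \<le> i \<Longrightarrow> i \<le> M \<Longrightarrow> 0 < x i"
    and x_mono: "\<And>i. i < M \<Longrightarrow> x i \<le> x (Suc i)"
    and test_buyer_admissible: "\<And>a. a \<ge> 1 \<Longrightarrow> B (test_buyer M p x a)"
    and test_seller_admissible: "\<And>d j. d \<ge> 1 \<Longrightarrow> 1 \<le> j \<Longrightarrow> j \<le> M \<Longrightarrow> S (test_seller M p x d j)"
    and c_pos: "c > 0"
    and ratio: "\<And>\<beta> \<sigma>. B \<beta> \<Longrightarrow> S \<sigma> \<Longrightarrow> OPT M p \<beta> \<sigma> > 0 \<Longrightarrow>
                  c * OPT M p \<beta> \<sigma> \<le> gain M p (mech \<beta> \<sigma>) \<beta> \<sigma>"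
begin

abbreviation outcome :: "real \<Rightarrow> real \<Rightarrow> nat \<Rightarrow> nat \<Rightarrow> real" where
  "outcome a d j \<equiv> mech (test_buyer M p x a) (test_seller M p x d j)"

abbreviation value_at :: "nat \<Rightarrow> real" where
  "value_at j \<equiv> expected_value M x (outcome 1 1 j)"

abbreviation prob_at :: "nat \<Rightarrow> real" where
  "prob_at j \<equiv> trade_prob M (outcome 1 1 j)"

lemma x_nonneg: "i \<le> M \<Longrightarrow> 0 \<le> x i"
  using x_0 x_pos by (cases "i = 0") (auto intro: less_imp_le)

lemma outcome_distribution:
  "a \<ge> 1 \<Longrightarrow> d \<ge> 1 \<Longrightarrow> 1 \<le> j \<Longrightarrow> j \<le> M \<Longrightarrow> is_distribution M (outcome a d j)"
  by (simp add: DSIC_is_distribution[OF DSIC] test_buyer_admissible test_seller_admissible)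

lemma value_outcome_buyer_scale:
  assumes "a \<ge> 1" "1 \<le> j" "j \<le> M"
  shows "expected_value M x (outcome a 1 j) = value_at j"
proof -
  have B: "B (test_buyer M p x a)" "B (test_buyer M p x 1)"
    and S: "S (test_seller M p x 1 j)"
    using assms by (simp_all add: test_buyer_admissible test_seller_admissible)
  from DSIC_buyer_truthful[OF DSIC B S] DSIC_buyer_truthful[OF DSIC B(2,1) S] assms(1)
  show ?thesis by (simp add: expected_buyer_util_test_buyer x_0)
qed

lemma seller_surplus_outcome_seller_scale:
  assumes "d \<ge> 1" "1 \<le> j" "j \<le> M"
  shows "x j * trade_prob M (outcome 1 d j) - expected_value M x (outcome 1 d j)
    = x j * prob_at j - value_at j"
proof -
  have B: "B (test_buyer M p x 1)"
    and S: "S (test_seller M p x d j)" "S (test_seller M p x 1 j)"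
    using assms by (simp_all add: test_buyer_admissible test_seller_admissible)
  from DSIC_seller_truthful[OF DSIC B S] DSIC_seller_truthful[OF DSIC B S(2,1)] assms(1)
  show ?thesis by (simp add: expected_seller_util_test_seller)
qed

text \<open>A buyer of large scale \<open>a\<close> makes \<open>OPT \<ge> a x\<^sub>j\<close> while the seller's part of the gain
  stays below \<open>x\<^sub>j\<close>, and the buyer's part is \<open>a\<close> times the unscaled expected value.\<close>

lemma value_at_ge:
  assumes "1 \<le> j" "j \<le> M"
  shows "c * x j \<le> value_at j"
proof -
  have "a * (c * x j - value_at j) \<le> x j" if a: "a \<ge> 1" for a
  proof -
    let ?\<beta> = "test_buyer M p x a" and ?\<sigma> = "test_seller M p x 1 j"
    have dist: "is_distribution M (outcome a 1 j)"
      using outcome_distribution a assms by simp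
    have "0 < a * x j" using a x_pos assms by simp
    moreover have OPT: "a * x j \<le> OPT M p ?\<beta> ?\<sigma>"
      using OPT_test_profile_ge assms a x_pos by (simp add: less_imp_le)
    ultimately have OPT_pos: "OPT M p ?\<beta> ?\<sigma> > 0" by simp
    from OPT c_pos have "c * (a * x j) \<le> c * OPT M p ?\<beta> ?\<sigma>" by simp
    also have "c * OPT M p ?\<beta> ?\<sigma> \<le> gain M p (outcome a 1 j) ?\<beta> ?\<sigma>"
      using ratio OPT_pos a assms
      by (simp add: test_buyer_admissible test_seller_admissible)
    also have "\<dots> \<le> a * value_at j + x j * trade_prob M (outcome a 1 j)"
      using value_outcome_buyer_scale[OF a assms] expected_value_nonneg[OF dist, of x] x_nonneg
      by (simp add: gain_test_profile)
    also have "\<dots> \<le> a * value_at j + x j"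
      using trade_prob_le_1[OF dist] x_nonneg[OF assms(2)] by (simp add: mult_left_le)
    finally show ?thesis by (simp add: algebra_simps)
  qed
  then have "c * x j - value_at j \<le> 0" by (rule nonpos_if_multiples_bounded)
  then show ?thesis by simp
qed

text \<open>Symmetrically, a seller of large scale \<open>d\<close> would make the gain negative if her
  surplus were negative.\<close>

lemma seller_surplus_nonneg:
  assumes "1 \<le> j" "j \<le> M"
  shows "0 \<le> x j * prob_at j - value_at j"
proof -
  have "d * (value_at j - x j * prob_at j) \<le> (\<Sum>i=1..M. x i)" if d: "d \<ge> 1" for d
  proof -
    let ?\<beta> = "test_buyer M p x 1" and ?\<sigma> = "test_seller M p x d j"
    have dist: "is_distribution M (outcome 1 d j)"
      using outcome_distribution d assms by simp
    have "0 < x j" using x_pos assms by simp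
    moreover have "x j \<le> OPT M p ?\<beta> ?\<sigma>"
      using OPT_test_profile_ge[of j M 1 x] assms x_nonneg by simp
    ultimately have OPT_pos: "OPT M p ?\<beta> ?\<sigma> > 0" by simp
    with c_pos have "0 < c * OPT M p ?\<beta> ?\<sigma>" by simp
    also have "c * OPT M p ?\<beta> ?\<sigma> \<le> gain M p (outcome 1 d j) ?\<beta> ?\<sigma>"
      using ratio OPT_pos d assms
      by (simp add: test_buyer_admissible test_seller_admissible)
    also have "\<dots> = expected_value M x (outcome 1 d j) + d * (x j * prob_at j - value_at j)"
      using seller_surplus_outcome_seller_scale[OF d assms] by (simp add: gain_test_profile)
    also have "\<dots> \<le> (\<Sum>i=1..M. x i) + d * (x j * prob_at j - value_at j)"
      using expected_value_le_sum[OF dist, of x] x_nonneg by simp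
    finally show ?thesis by (simp add: algebra_simps)
  qed
  then have "value_at j - x j * prob_at j \<le> 0" by (rule nonpos_if_multiples_bounded)
  then show ?thesis by simp
qed

lemma seller_surplus_truthful:
  assumes "1 \<le> j" "j \<le> M" "1 \<le> k" "k \<le> M"
  shows "x j * prob_at k - value_at k \<le> x j * prob_at j - value_at j"
proof -
  have "B (test_buyer M p x 1)" "S (test_seller M p x 1 j)" "S (test_seller M p x 1 k)"
    using assms by (simp_all add: test_buyer_admissible test_seller_admissible)
  from DSIC_seller_truthful[OF DSIC this] show ?thesis
    by (simp add: expected_seller_util_test_seller)
qed

lemma prob_at_ge:
  assumes "1 \<le> k" "k \<le> M"
  shows "c * (\<Sum>i\<in>{1..<k}. 1 - x i / x (Suc i)) + value_at k / x k \<le> prob_at k"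
  using assms
proof (induction k rule: nat_induct_at_least)
  case base
  then show ?case
    using seller_surplus_nonneg[of 1] x_pos[of 1] by (simp add: divide_le_eq mult.commute)
next
  case (Suc k)
  have xk: "0 < x k" "0 < x (Suc k)" "x k \<le> x (Suc k)"
    using x_pos x_mono Suc by auto
  have "c * (1 - x k / x (Suc k)) = c * x k * (1 / x k - 1 / x (Suc k))"
    using xk by (simp add: field_simps)
  also have "\<dots> \<le> value_at k * (1 / x k - 1 / x (Suc k))"
    using value_at_ge[of k] Suc xk by (intro mult_right_mono) (simp_all add: frac_le)
  finally have step: "c * (1 - x k / x (Suc k)) \<le> value_at k / x k - value_at k / x (Suc k)"
    by (simp add: right_diff_distrib)
  have "x (Suc k) * prob_at k - value_at k \<le> x (Suc k) * prob_at (Suc k) - value_at (Suc k)"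
    using seller_surplus_truthful Suc by simp
  then have "prob_at k + (value_at (Suc k) - value_at k) / x (Suc k) \<le> prob_at (Suc k)"
    using xk by (simp add: field_simps)
  with Suc step show ?case by (simp add: diff_divide_distrib algebra_simps)
qed

theorem ratio_sum_bound: "c * (1 + (\<Sum>k\<in>{1..<M}. 1 - x k / x (Suc k))) \<le> 1"
proof -
  have "c \<le> value_at M / x M"
    using value_at_ge[of M] M_ge_1 x_pos[of M] by (simp add: le_divide_eq)
  moreover have "prob_at M \<le> 1"
    using trade_prob_le_1 outcome_distribution M_ge_1 by simp
  ultimately show ?thesis
    using prob_at_ge[of M] M_ge_1 by (simp add: algebra_simps)
qed

end

lemma general_ratio_le:
  assumes "M \<ge> 1" "DSIC M p (buyer_general M) (general_val M) mech" "c > 0"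
    and "\<And>\<beta> \<sigma>. buyer_general M \<beta> \<Longrightarrow> general_val M \<sigma> \<Longrightarrow> OPT M p \<beta> \<sigma> > 0 \<Longrightarrow>
           c * OPT M p \<beta> \<sigma> \<le> gain M p (mech \<beta> \<sigma>) \<beta> \<sigma>"
  shows "c \<le> 1 / real M"
proof -
  have "R * ((real M - 1) * c - (1 - c)) \<le> (real M - 1) * c" if R: "R \<ge> 1" for R :: real
  proof -
    define x where "x i = (if i = 0 then 0 else R ^ i)" for i :: nat
    interpret ratio_bounded_mechanism M p c x "buyer_general M" "general_val M" mech
      using assms R by unfold_locales (auto simp: x_def test_buyer_general test_seller_general)
    have "(\<Sum>k\<in>{1..<M}. 1 - x k / x (Suc k)) = (real M - 1) * (1 - 1 / R)"
      using R \<open>M \<ge> 1\<close> by (simp add: x_def)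
    with ratio_sum_bound have "c * (1 + (real M - 1) * (1 - 1 / R)) \<le> 1" by simp
    with R show ?thesis by (simp add: field_simps)
  qed
  then have "(real M - 1) * c - (1 - c) \<le> 0" by (rule nonpos_if_multiples_bounded)
  with \<open>M \<ge> 1\<close> show ?thesis by (simp add: field_simps)
qed

lemma harmonic_eq_ratio_sum:
  "M \<ge> 1 \<Longrightarrow> (\<Sum>j=1..M. 1 / real j) = 1 + (\<Sum>k\<in>{1..<M}. 1 - real k / real (Suc k))"
proof (induction M rule: nat_induct_at_least)
  case (Suc n)
  have "1 - real n / real (Suc n) = 1 / real (Suc n)" by (simp add: field_simps)
  with Suc show ?case by simp
qed simp

lemma submodular_ratio_le:
  assumes "M \<ge> 1" "DSIC M p (buyer_submodular M) (submodular_val M) mech" "c > 0"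
    and "\<And>\<beta> \<sigma>. buyer_submodular M \<beta> \<Longrightarrow> submodular_val M \<sigma> \<Longrightarrow> OPT M p \<beta> \<sigma> > 0 \<Longrightarrow>
           c * OPT M p \<beta> \<sigma> \<le> gain M p (mech \<beta> \<sigma>) \<beta> \<sigma>"
  shows "c \<le> 1 / (\<Sum>j=1..M. 1 / real j)"
proof -
  interpret ratio_bounded_mechanism M p c real "buyer_submodular M" "submodular_val M" mech
    using assms by unfold_locales (auto simp: test_buyer_submodular test_seller_submodular)
  have "0 < (\<Sum>j=1..M. 1 / real j)" using assms by (intro sum_pos) auto
  with ratio_sum_bound harmonic_eq_ratio_sum[OF \<open>M \<ge> 1\<close>] show ?thesis
    by (simp add: le_divide_eq mult.commute)
qed

theorem corollary1:
  fixes M :: nat and p :: real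
    and mech :: "(nat \<Rightarrow> real) \<Rightarrow> (nat \<Rightarrow> real) \<Rightarrow> (nat \<Rightarrow> real)"
  assumes "M \<ge> 1"
  shows "(DSIC M p (buyer_general M) (general_val M) mech \<longrightarrow>
           competitive_ratio M p (buyer_general M) (general_val M) mech \<le> ereal (1 / real M))
       \<and> (DSIC M p (buyer_submodular M) (submodular_val M) mech \<longrightarrow>
           competitive_ratio M p (buyer_submodular M) (submodular_val M) mech
             \<le> ereal (1 / (\<Sum>j=1..M. 1 / real j)))"
proof (intro conjI impI)
  assume "DSIC M p (buyer_general M) (general_val M) mech"
  with assms show "competitive_ratio M p (buyer_general M) (general_val M) mech \<le> ereal (1 / real M)"
    by (intro competitive_ratio_le general_ratio_le) auto
next
  assume "DSIC M p (buyer_submodular M) (submodular_val M) mech"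
  moreover have "0 < (\<Sum>j=1..M. 1 / real j)" using assms by (intro sum_pos) auto
  ultimately show "competitive_ratio M p (buyer_submodular M) (submodular_val M) mech
      \<le> ereal (1 / (\<Sum>j=1..M. 1 / real j))"
    using assms by (intro competitive_ratio_le submodular_ratio_le) auto
qed

end
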